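(* Let $V$ be an irreducible cuspidal $\mathcal G$-module. Then either $t^{\mathbf r}$ acts injectively on $V$ for every $\mathbf r\in\mathbb Z^n\setminus\{\mathbf 0\}$, or $t^{\mathbf r}$ acts locally nilpotently on $V$ for every $\mathbf r\in\mathbb Z^n\setminus\{\mathbf 0\}$.
   Context: $n\ge 3$. $\mathcal A_n=\mathbb C[t_1^{\pm1},\dots,t_n^{\pm1}]$, $t^{\mathbf m}=t_1^{m_1}\cdots t_n^{m_n}$, $d_j=t_j\frac{\partial}{\partial t_j}$, $(\mathbf u|\mathbf v)=\sum_iu_iv_i$, $D(\mathbf u,\mathbf r)=\sum_iu_it^{\mathbf r}d_i$. $\mathcal D_n=\mathrm{span}\{D(\mathbf u,\mathbf r):(\mathbf u|\mathbf r)=0\}$ with $[D(\mathbf p,\mathbf m),D(\mathbf q,\mathbf k)]=D((\mathbf p|\mathbf k)\mathbf q-(\mathbf q|\mathbf m)\mathbf p,\mathbf m+\mathbf k)$; $\mathcal G=\mathcal D_n\ltimes\mathcal A_n$ with $[D(\mathbf u,\mathbf r),t^{\mathbf m}]=(\mathbf u|\mathbf m)t^{\mathbf r+\mathbf m}$, $[t^{\mathbf r},t^{\mathbf m}]=0$. $\mathcal H=\mathrm{span}\{d_j\}$; a cuspidal module is a weight module for $\mathcal H$ whose weight spaces have uniformly bounded finite dimension. *)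

theory Defs
  imports "HOL-Analysis.Analysis"
begin

text \<open>Index set of the torus: a finite type 'n with n = CARD('n).
  Vectors u in C^n are complex^'n, lattice points r in Z^n are int^'n.\<close>

definition pair :: "complex^'n::finite \<Rightarrow> int^'n \<Rightarrow> complex" where
  "pair u m = (\<Sum>i\<in>UNIV. u$i * of_int (m$i))"

text \<open>Pairing of u in C^n with a weight lambda in C^n (= H^*, via d_j -> lambda_j).\<close>
definition cpair :: "complex^'n::finite \<Rightarrow> complex^'n \<Rightarrow> complex" where
  "cpair u l = (\<Sum>i\<in>UNIV. u$i * l$i)"

text \<open>A representation of G = D_n \<ltimes> A_n on the complex vector space ('v, smul):
  dact u r is the action of D(u,r) (meaningful only when (u|r)=0),
  tact m is the action of t^m.  Since the D(u,r) with (u|r)=0, for fixed r,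
  form the subspace r^perp (x) t^r and D_n is the direct sum of these over r,
  and the t^m form a basis of A_n, a linear Lie algebra action is exactly
  the following data.\<close>
definition is_G_module ::
  "(complex \<Rightarrow> 'v::ab_group_add \<Rightarrow> 'v) \<Rightarrow> (complex^'n::finite \<Rightarrow> int^'n \<Rightarrow> 'v \<Rightarrow> 'v)
    \<Rightarrow> (int^'n \<Rightarrow> 'v \<Rightarrow> 'v) \<Rightarrow> bool" where
  "is_G_module smul dact tact \<longleftrightarrow>
     vector_space smul \<and>
     (\<forall>u r. pair u r = 0 \<longrightarrow> Vector_Spaces.linear smul smul (dact u r)) \<and>
     (\<forall>m. Vector_Spaces.linear smul smul (tact m)) \<and>
     (\<forall>a b u w r v. pair u r = 0 \<and> pair w r = 0 \<longrightarrow>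
        dact (\<chi> i. a * u$i + b * w$i) r v = smul a (dact u r v) + smul b (dact w r v)) \<and>
     (\<forall>p m q k v. pair p m = 0 \<and> pair q k = 0 \<longrightarrow>
        dact p m (dact q k v) - dact q k (dact p m v)
          = dact (\<chi> i. pair p k * q$i - pair q m * p$i) (m + k) v) \<and>
     (\<forall>u r m v. pair u r = 0 \<longrightarrow>
        dact u r (tact m v) - tact m (dact u r v) = smul (pair u m) (tact (r + m) v)) \<and>
     (\<forall>r m v. tact r (tact m v) = tact m (tact r v))"

text \<open>Weight space for H = span{d_j} = {D(u,0)}.\<close>
definition weight_space ::
  "(complex \<Rightarrow> 'v::ab_group_add \<Rightarrow> 'v) \<Rightarrow> (complex^'n::finite \<Rightarrow> int^'n \<Rightarrow> 'v \<Rightarrow> 'v)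
    \<Rightarrow> complex^'n \<Rightarrow> 'v set" where
  "weight_space smul dact l = {v. \<forall>u. dact u 0 v = smul (cpair u l) v}"

definition is_cuspidal ::
  "(complex \<Rightarrow> 'v::ab_group_add \<Rightarrow> 'v) \<Rightarrow> (complex^'n::finite \<Rightarrow> int^'n \<Rightarrow> 'v \<Rightarrow> 'v) \<Rightarrow> bool" where
  "is_cuspidal smul dact \<longleftrightarrow>
     module.span smul (\<Union>l. weight_space smul dact l) = UNIV \<and>
     (\<exists>N::nat. \<forall>l S. S \<subseteq> weight_space smul dact l \<and> \<not> module.dependent smul S
                  \<longrightarrow> finite S \<and> card S \<le> N)"

definition is_irreducible ::
  "(complex \<Rightarrow> 'v::ab_group_add \<Rightarrow> 'v) \<Rightarrow> (complex^'n::finite \<Rightarrow> int^'n \<Rightarrow> 'v \<Rightarrow> 'v)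
    \<Rightarrow> (int^'n \<Rightarrow> 'v \<Rightarrow> 'v) \<Rightarrow> bool" where
  "is_irreducible smul dact tact \<longleftrightarrow>
     (\<exists>v::'v. v \<noteq> 0) \<and>
     (\<forall>W. module.subspace smul W \<and>
          (\<forall>u r. pair u r = 0 \<longrightarrow> dact u r ` W \<subseteq> W) \<and>
          (\<forall>m. tact m ` W \<subseteq> W) \<longrightarrow> W = {0} \<or> W = UNIV)"

end

theory Submission
  imports Defs
begin

text \<open>Let y be a linear operator that commutes with every t^m and whose commutator with each
  D(u,r) commutes with y. The vectors killed by a power of y form a submodule, so y is injective
  or locally nilpotent; this applies to every t^r and to every t^a + t^b. If y is locally
  nilpotent and its commutator with D is injective, then D strictly raises the nilpotency height
  of nonzero vectors. Vectors of pairwise distinct heights are linearly independent, so by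
  cuspidality no operator preserving a weight space raises heights. With (u|s) = 0 and
  (u|x) \<noteq> 0 this is applied to D(u,-s) D(u,s), to t^p D(u,-p), and to D(u,p) followed by
  the inverse of t^p on a weight space of maximal dimension. The resulting rules (if t^x is
  locally nilpotent, t^p is injective and x, p are independent, then t^(x+p) and t^(x-p) are
  locally nilpotent, and t^(x+s), t^(x-s) are not both injective) exclude a locally nilpotent
  t^r next to an injective t^m with r, m independent. For n \<ge> 3 any two nonzero lattice
  vectors are independent of a common coordinate vector.\<close>

section \<open>Lattice vectors and Gram determinants\<close>

definition int_dot :: "int^'n::finite \<Rightarrow> int^'n \<Rightarrow> int" where
  "int_dot a b = (\<Sum>i\<in>UNIV. a$i * b$i)"

text \<open>gram_det a b is nonzero iff a and b are linearly independent; independence is only ever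
  used in this form.\<close>

definition gram_det :: "int^'n::finite \<Rightarrow> int^'n \<Rightarrow> int" where
  "gram_det a b = int_dot a a * int_dot b b - (int_dot a b)\<^sup>2"

lemma int_dot_commute: "int_dot a b = int_dot b a"
  by (simp add: int_dot_def mult.commute)

lemma int_dot_add_left: "int_dot (a + b) c = int_dot a c + int_dot b c"
  by (simp add: int_dot_def sum.distrib distrib_right)

lemma int_dot_diff_left: "int_dot (a - b) c = int_dot a c - int_dot b c"
  by (simp add: int_dot_def sum_subtractf left_diff_distrib)

lemma int_dot_uminus_left: "int_dot (- a) c = - int_dot a c"
  by (simp add: int_dot_def sum_negf)

lemma int_dot_add_right: "int_dot a (b + c) = int_dot a b + int_dot a c"
  by (simp add: int_dot_def sum.distrib distrib_left)

lemma int_dot_diff_right: "int_dot a (b - c) = int_dot a b - int_dot a c"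
  by (simp add: int_dot_def sum_subtractf right_diff_distrib)

lemma int_dot_uminus_right: "int_dot a (- c) = - int_dot a c"
  by (simp add: int_dot_def sum_negf)

lemmas int_dot_simps =
  int_dot_add_left int_dot_diff_left int_dot_uminus_left
  int_dot_add_right int_dot_diff_right int_dot_uminus_right

lemma int_dot_axis_left:
  fixes a :: "int^'n::finite"
  shows "int_dot (axis i 1) a = a$i"
proof -
  have "(axis i 1 :: int^'n) $ k * a $ k = (if k = i then a $ k else 0)" for k
    by (simp add: axis_def)
  then show ?thesis by (simp add: int_dot_def)
qed

lemma gram_det_commute: "gram_det a b = gram_det b a"
  by (simp add: gram_det_def int_dot_commute[of a b])

lemma gram_det_add_left: "gram_det (a + b) b = gram_det a b"
  unfolding gram_det_def int_dot_simps int_dot_commute[of b a]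
  by (simp add: power2_eq_square algebra_simps)

lemma gram_det_add_self_right: "gram_det a (a + b) = gram_det a b"
  unfolding gram_det_def int_dot_simps int_dot_commute[of b a]
  by (simp add: power2_eq_square algebra_simps)

lemma gram_det_diff_left: "gram_det (a - b) b = gram_det a b"
  unfolding gram_det_def int_dot_simps int_dot_commute[of b a]
  by (simp add: power2_eq_square algebra_simps)

lemma gram_det_uminus_left: "gram_det (- a) b = gram_det a b"
  unfolding gram_det_def int_dot_simps
  by (simp add: power2_eq_square)

lemma gram_det_double_left: "gram_det (a + a) b = 4 * gram_det a b"
  unfolding gram_det_def int_dot_simps
  by (simp add: power2_eq_square algebra_simps)

lemma gram_det_axis_ne_zero:
  fixes x :: "int^'n::finite"
  assumes "x$j \<noteq> 0" "j \<noteq> i"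
  shows "gram_det (axis i 1) x \<noteq> 0"
proof -
  have "x$i * x$i + x$j * x$j = (\<Sum>k\<in>{i, j}. x$k * x$k)"
    using assms(2) by simp
  also have "\<dots> \<le> int_dot x x"
    unfolding int_dot_def by (rule sum_mono2) auto
  finally have "x$i * x$i + x$j * x$j \<le> int_dot x x" .
  moreover have "0 < (x$j)\<^sup>2"
    using assms(1) by simp
  ultimately have "(x$i)\<^sup>2 < int_dot x x"
    by (simp add: power2_eq_square)
  then show ?thesis
    by (simp add: gram_det_def int_dot_axis_left)
qed

lemma exists_gram_det_ne_zero_with_both:
  fixes r m :: "int^'n::finite"
  assumes "CARD('n) \<ge> 3" "r \<noteq> 0" "m \<noteq> 0"
  obtains w where "gram_det w r \<noteq> 0" "gram_det w m \<noteq> 0"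
proof -
  \<comment> \<open>The only use of n \<ge> 3: a coordinate i other than a nonzero coordinate of r and
    a nonzero coordinate of m.\<close>
  obtain j k where j: "r$j \<noteq> 0" and k: "m$k \<noteq> 0"
    using assms(2,3) by (metis vec_eq_iff zero_index)
  have "\<not> UNIV \<subseteq> {j, k}"
    using card_mono[of "{j, k}" UNIV] card_insert_le_m1[of 2 "{k}" j] assms(1) by auto
  then obtain i where "i \<noteq> j" "i \<noteq> k"
    by blast
  then show ?thesis
    using that gram_det_axis_ne_zero[OF j] gram_det_axis_ne_zero[OF k] by metis
qed

lemma pair_add: "pair u (a + b) = pair u a + pair u b"
  by (simp add: pair_def sum.distrib distrib_left)

lemma pair_diff: "pair u (a - b) = pair u a - pair u b"
  by (simp add: pair_def sum_subtractf right_diff_distrib)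

lemma pair_uminus: "pair u (- a) = - pair u a"
  by (simp add: pair_def sum_negf)

lemma pair_zero [simp]: "pair u 0 = 0"
  by (simp add: pair_def)

lemma exists_separating_pair:
  fixes x s :: "int^'n::finite"
  assumes "gram_det x s \<noteq> 0"
  obtains u where "pair u s = 0" "pair u x \<noteq> 0"
proof -
  define u :: "complex^'n" where
    "u = (\<chi> i. of_int (int_dot s s * x$i - int_dot x s * s$i))"
  have pair_u: "pair u m = of_int (int_dot s s * int_dot x m - int_dot x s * int_dot s m)" for m
  proof -
    have "pair u m = of_int (\<Sum>i\<in>UNIV. (int_dot s s * x$i - int_dot x s * s$i) * m$i)"
      by (simp add: u_def pair_def)
    also have "(\<Sum>i\<in>UNIV. (int_dot s s * x$i - int_dot x s * s$i) * m$i)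
        = int_dot s s * int_dot x m - int_dot x s * int_dot s m"
      unfolding int_dot_def[of x m] int_dot_def[of s m]
      by (simp add: sum_distrib_left sum_subtractf algebra_simps)
    finally show ?thesis .
  qed
  show ?thesis
  proof (rule that)
    show "pair u s = 0"
      by (simp add: pair_u int_dot_commute[of s x])
    have "int_dot s s * int_dot x x - int_dot x s * int_dot s x = gram_det x s"
      by (simp add: gram_det_def int_dot_commute[of s x] power2_eq_square)
    then show "pair u x \<noteq> 0"
      using assms by (simp add: pair_u)
  qed
qed

section \<open>Nilpotency height\<close>

definition locally_nilpotent :: "('a::zero \<Rightarrow> 'a) \<Rightarrow> bool" where
  "locally_nilpotent f \<longleftrightarrow> (\<forall>v. \<exists>k. (f ^^ k) v = 0)"

text \<open>nil_height f v is the junk value 0 when no power of f kills v.\<close>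

definition nil_height :: "('a::zero \<Rightarrow> 'a) \<Rightarrow> 'a \<Rightarrow> nat" where
  "nil_height f v = (LEAST k. (f ^^ k) v = 0)"

lemma funpow_apply_commute: "(\<And>v. f (g v) = g (f v)) \<Longrightarrow> (f ^^ k) (g v) = g ((f ^^ k) v)"
  by (induction k) simp_all

text \<open>Characteristic 0 is needed in nil_height_less_apply, where k + 1 must be a nonzero scalar.\<close>

locale vector_space_char_0 = vector_space scale
  for scale :: "'a::field_char_0 \<Rightarrow> 'b::ab_group_add \<Rightarrow> 'b"
begin

sublocale endo: vector_space_pair scale scale ..

abbreviation linear_endo :: "('b \<Rightarrow> 'b) \<Rightarrow> bool" where
  "linear_endo f \<equiv> Vector_Spaces.linear scale scale f"

lemma linear_funpow: "linear_endo f \<Longrightarrow> linear_endo (f ^^ k)"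
  by (induction k) (simp_all add: linear_id Vector_Spaces.linear_compose)

lemma inj_scale_comp: "c \<noteq> 0 \<Longrightarrow> inj f \<Longrightarrow> inj (\<lambda>v. scale c (f v))"
  by (simp add: inj_def)

lemma funpow_eq_0_mono:
  assumes "linear_endo f" "(f ^^ k) v = 0" "k \<le> j"
  shows "(f ^^ j) v = 0"
proof -
  have "(f ^^ j) v = (f ^^ (j - k)) ((f ^^ k) v)"
    using assms(3) by (metis funpow_add le_add_diff_inverse2 o_apply)
  then show ?thesis
    using assms(2) endo.linear_0[OF linear_funpow[OF assms(1)]] by simp
qed

lemma nil_height_le_iff:
  assumes "linear_endo f" "locally_nilpotent f"
  shows "nil_height f v \<le> k \<longleftrightarrow> (f ^^ k) v = 0"
proof
  have "\<exists>k. (f ^^ k) v = 0"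
    using assms(2) by (simp add: locally_nilpotent_def)
  then have "(f ^^ nil_height f v) v = 0"
    unfolding nil_height_def by (rule LeastI_ex)
  then show "nil_height f v \<le> k \<Longrightarrow> (f ^^ k) v = 0"
    using funpow_eq_0_mono[OF assms(1)] by blast
qed (simp add: nil_height_def Least_le)

lemma nil_height_eq_0_iff:
  assumes "linear_endo f" "locally_nilpotent f"
  shows "nil_height f v = 0 \<longleftrightarrow> v = 0"
  using nil_height_le_iff[OF assms, of v 0] by simp

lemma subspace_locally_nilpotent_vectors:
  assumes "linear_endo f"
  shows "subspace {v. \<exists>k. (f ^^ k) v = 0}"
  unfolding subspace_def
proof (intro conjI ballI allI)
  show "0 \<in> {v. \<exists>k. (f ^^ k) v = 0}"
    by (auto intro: exI[of _ 0])
next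
  fix a b
  assume "a \<in> {v. \<exists>k. (f ^^ k) v = 0}" "b \<in> {v. \<exists>k. (f ^^ k) v = 0}"
  then obtain i j where "(f ^^ i) a = 0" "(f ^^ j) b = 0"
    by blast
  then have "(f ^^ (i + j)) a = 0" "(f ^^ (i + j)) b = 0"
    using funpow_eq_0_mono[OF assms] by (metis le_add1 le_add2)+
  then have "(f ^^ (i + j)) (a + b) = 0"
    by (simp add: endo.linear_add[OF linear_funpow[OF assms]])
  then show "a + b \<in> {v. \<exists>k. (f ^^ k) v = 0}"
    by blast
next
  fix c a
  assume "a \<in> {v. \<exists>k. (f ^^ k) v = 0}"
  then show "scale c a \<in> {v. \<exists>k. (f ^^ k) v = 0}"
    using endo.linear_scale[OF linear_funpow[OF assms]] by auto
qed

lemma exists_kernel_vector_in_orbit: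
  fixes v :: 'b
  assumes "linear_endo f" "locally_nilpotent f" "v \<noteq> 0"
  obtains k where "(f ^^ k) v \<noteq> 0" "f ((f ^^ k) v) = 0"
proof -
  obtain k where k: "nil_height f v = Suc k"
    using nil_height_eq_0_iff[OF assms(1,2)] assms(3) not0_implies_Suc by blast
  show ?thesis
  proof (rule that)
    show "(f ^^ k) v \<noteq> 0"
      using k nil_height_le_iff[OF assms(1,2), of v k] by simp
    show "f ((f ^^ k) v) = 0"
      using k nil_height_le_iff[OF assms(1,2), of v "Suc k"] by simp
  qed
qed

lemma not_inj_if_locally_nilpotent:
  fixes v :: 'b
  assumes "linear_endo f" "locally_nilpotent f" "v \<noteq> 0"
  shows "\<not> inj f"
  using exists_kernel_vector_in_orbit[OF assms] endo.linear_inj_iff_eq_0[OF assms(1)] by metis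

lemma exists_common_kernel_vector:
  fixes v :: 'b
  assumes A: "linear_endo A" "locally_nilpotent A"
    and B: "linear_endo B" "locally_nilpotent B"
    and AB: "\<And>v. A (B v) = B (A v)"
    and "v \<noteq> 0"
  obtains w where "w \<noteq> 0" "A w = 0" "B w = 0"
proof -
  obtain k where k: "(A ^^ k) v \<noteq> 0" "A ((A ^^ k) v) = 0"
    using exists_kernel_vector_in_orbit[OF A \<open>v \<noteq> 0\<close>] .
  obtain j where j: "(B ^^ j) ((A ^^ k) v) \<noteq> 0" "B ((B ^^ j) ((A ^^ k) v)) = 0"
    using exists_kernel_vector_in_orbit[OF B k(1)] .
  have "A ((B ^^ j) ((A ^^ k) v)) = (B ^^ j) (A ((A ^^ k) v))"
    using funpow_apply_commute[of B A j] AB by metis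
  then have "A ((B ^^ j) ((A ^^ k) v)) = 0"
    using k(2) endo.linear_0[OF linear_funpow[OF B(1)]] by simp
  then show ?thesis
    using that j by blast
qed

lemma funpow_commutator:
  assumes y: "linear_endo y"
    and yz: "\<And>v. y (z v) = z (y v)"
    and yD: "\<And>v. y (D v) = D (y v) - z v"
  shows "(y ^^ Suc k) (D v) = D ((y ^^ Suc k) v) - scale (of_nat (Suc k)) (z ((y ^^ k) v))"
proof (induction k)
  case 0
  show ?case
    using yD by simp
next
  case (Suc k)
  have "(y ^^ Suc (Suc k)) (D v)
      = y (D ((y ^^ Suc k) v)) - scale (of_nat (Suc k)) (y (z ((y ^^ k) v)))"
    using Suc by (simp add: endo.linear_diff[OF y] endo.linear_scale[OF y])
  also have "\<dots> = D ((y ^^ Suc (Suc k)) v) - z ((y ^^ Suc k) v)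
      - scale (of_nat (Suc k)) (z ((y ^^ Suc k) v))"
    using yD yz by simp
  also have "\<dots> = D ((y ^^ Suc (Suc k)) v) - scale (of_nat (Suc (Suc k))) (z ((y ^^ Suc k) v))"
    by (simp only: of_nat_Suc[of "Suc k"] scale_left_distrib scale_one diff_diff_eq)
  finally show ?case .
qed

lemma funpow_commutator_eq_0:
  assumes y: "linear_endo y" and D: "linear_endo D"
    and yz: "\<And>v. y (z v) = z (y v)"
    and yD: "\<And>v. y (D v) = D (y v) - z v"
    and "(y ^^ k) v = 0"
  shows "(y ^^ Suc k) (D v) = 0"
proof -
  have "z 0 = 0"
    using yD[of 0] endo.linear_0[OF y] endo.linear_0[OF D] by simp
  then show ?thesis
    using funpow_commutator[of y z D, OF y yz yD] assms(5) endo.linear_0[OF D]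
      funpow_eq_0_mono[OF y assms(5), of "Suc k"] by simp
qed

lemma nil_height_less_apply:
  assumes y: "linear_endo y" "locally_nilpotent y"
    and z: "linear_endo z" "inj z" "\<And>v. y (z v) = z (y v)"
    and D: "linear_endo D" "\<And>v. y (D v) = D (y v) - z v"
    and "v \<noteq> 0"
  shows "nil_height y v < nil_height y (D v)"
proof -
  obtain k where k: "nil_height y v = Suc k"
    using nil_height_eq_0_iff[OF y] \<open>v \<noteq> 0\<close> not0_implies_Suc by blast
  have "(y ^^ Suc k) v = 0" "(y ^^ k) v \<noteq> 0"
    using k nil_height_le_iff[OF y, of v "Suc k"] nil_height_le_iff[OF y, of v k] by simp_all
  then have "(y ^^ Suc k) (D v) = - scale (of_nat (Suc k)) (z ((y ^^ k) v))"
    using funpow_commutator[of y z D, OF y(1) z(3) D(2)] endo.linear_0[OF D(1)] by simp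
  moreover have "z ((y ^^ k) v) \<noteq> 0"
    using \<open>(y ^^ k) v \<noteq> 0\<close> endo.linear_inj_iff_eq_0[OF z(1)] z(2) by blast
  ultimately have "(y ^^ Suc k) (D v) \<noteq> 0"
    by (simp del: of_nat_Suc)
  then show ?thesis
    using nil_height_le_iff[OF y, of "D v" "Suc k"] k by simp
qed

lemma nil_height_apply_inj_commuting:
  assumes "linear_endo T" "inj T" "\<And>v. y (T v) = T (y v)"
  shows "nil_height y (T v) = nil_height y v"
proof -
  have "(y ^^ k) (T v) = 0 \<longleftrightarrow> (y ^^ k) v = 0" for k
    using funpow_apply_commute[of y T k v] assms endo.linear_inj_iff_eq_0[OF assms(1)]
      endo.linear_0[OF assms(1)] by auto
  then show ?thesis
    unfolding nil_height_def by simp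
qed

lemma independent_if_inj_on_nil_height:
  assumes y: "linear_endo y" "locally_nilpotent y"
    and "0 \<notin> S" "inj_on (nil_height y) S"
  shows "independent S"
proof
  assume "dependent S"
  then obtain t c where t: "finite t" "t \<subseteq> S" "(\<Sum>v\<in>t. scale (c v) v) = 0"
    and "\<exists>v\<in>t. c v \<noteq> 0"
    unfolding dependent_explicit by blast
  define T where "T = {v \<in> t. c v \<noteq> 0}"
  have "finite T" "T \<noteq> {}"
    using t(1) \<open>\<exists>v\<in>t. c v \<noteq> 0\<close> by (auto simp: T_def)
  then obtain w where "w \<in> T" and w_Max: "nil_height y w = Max (nil_height y ` T)"
    using Max_in[of "nil_height y ` T"] by fastforce
  have w_max: "nil_height y v \<le> nil_height y w" if "v \<in> T" for v
    using that \<open>finite T\<close> by (simp add: w_Max)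
  have "w \<in> t" "c w \<noteq> 0" "w \<in> S"
    using \<open>w \<in> T\<close> t(2) by (auto simp: T_def)
  then obtain h where h: "nil_height y w = Suc h"
    using nil_height_eq_0_iff[OF y] assms(3) not0_implies_Suc by metis
  have others: "scale (c v) ((y ^^ h) v) = 0" if "v \<in> t - {w}" for v
  proof (cases "c v = 0")
    case False
    then have "v \<in> T" "v \<in> S"
      using that t(2) by (auto simp: T_def)
    then have "nil_height y v \<noteq> nil_height y w"
      using that \<open>w \<in> S\<close> assms(4) by (auto dest: inj_onD)
    then have "nil_height y v \<le> h"
      using w_max[OF \<open>v \<in> T\<close>] h by simp
    then have "(y ^^ h) v = 0"
      using nil_height_le_iff[OF y] by blast
    then show ?thesis
      by simp
  qed simp
  have "0 = (y ^^ h) (\<Sum>v\<in>t. scale (c v) v)"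
    using t(3) endo.linear_0[OF linear_funpow[OF y(1)]] by simp
  also have "\<dots> = (\<Sum>v\<in>t. scale (c v) ((y ^^ h) v))"
    by (simp add: endo.linear_sum[OF linear_funpow[OF y(1)]]
        endo.linear_scale[OF linear_funpow[OF y(1)]])
  also have "\<dots> = scale (c w) ((y ^^ h) w) + (\<Sum>v\<in>t - {w}. scale (c v) ((y ^^ h) v))"
    using t(1) \<open>w \<in> t\<close> by (rule sum.remove)
  also have "(\<Sum>v\<in>t - {w}. scale (c v) ((y ^^ h) v)) = 0"
    using others by (intro sum.neutral) blast
  finally have "scale (c w) ((y ^^ h) w) = 0"
    by simp
  moreover have "(y ^^ h) w \<noteq> 0"
    using h nil_height_le_iff[OF y, of w h] by simp
  ultimately show False
    using \<open>c w \<noteq> 0\<close> by simp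
qed

lemma exists_infinite_independent_if_height_raising:
  assumes y: "linear_endo y" "locally_nilpotent y"
    and "v \<in> W" "v \<noteq> 0" "Q ` W \<subseteq> W"
    and raise: "\<And>w. w \<in> W \<Longrightarrow> w \<noteq> 0 \<Longrightarrow> nil_height y w < nil_height y (Q w)"
  obtains S where "S \<subseteq> W" "independent S" "infinite S"
proof -
  define w where "w j = (Q ^^ j) v" for j
  have w_Suc: "w (Suc j) = Q (w j)" for j
    by (simp add: w_def)
  have "nil_height y 0 = 0"
    using nil_height_eq_0_iff[OF y] by simp
  have orbit: "w j \<in> W \<and> w j \<noteq> 0" for j
  proof (induction j)
    case 0
    show ?case
      using assms(3,4) by (simp add: w_def)
  next
    case (Suc j)
    then have "nil_height y (w j) < nil_height y (w (Suc j))"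
      using raise w_Suc by simp
    then show ?case
      using Suc assms(5) w_Suc \<open>nil_height y 0 = 0\<close> by auto
  qed
  have "strict_mono (nil_height y \<circ> w)"
  proof (rule strict_monoI_Suc)
    show "(nil_height y \<circ> w) j < (nil_height y \<circ> w) (Suc j)" for j
      using raise[of "w j"] orbit[of j] w_Suc[of j] by simp
  qed
  then have inj: "inj (nil_height y \<circ> w)"
    by (rule strict_mono_imp_inj_on)
  show ?thesis
  proof (rule that)
    show "range w \<subseteq> W"
      using orbit by blast
    have "0 \<notin> range w"
      using orbit by (metis rangeE)
    then show "independent (range w)"
      using independent_if_inj_on_nil_height[OF y _ inj_on_imageI[OF inj]] by blast
    show "infinite (range w)"
      using range_inj_infinite[OF inj_on_imageI2[OF inj]] .
  qed
qed

end

section \<open>Weight spaces of an irreducible cuspidal module\<close>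

definition shift_weight :: "complex^'n::finite \<Rightarrow> int^'n \<Rightarrow> complex^'n" where
  "shift_weight l s = l + (\<chi> i. of_int (s$i))"

lemma cpair_shift_weight: "cpair u (shift_weight l s) = cpair u l + pair u s"
  by (simp add: cpair_def pair_def shift_weight_def distrib_left sum.distrib)

lemma shift_weight_shift_weight: "shift_weight (shift_weight l a) b = shift_weight l (a + b)"
  by (simp add: shift_weight_def vec_eq_iff)

lemma shift_weight_0 [simp]: "shift_weight l 0 = l"
  by (simp add: shift_weight_def vec_eq_iff)

locale irreducible_cuspidal_module =
  fixes smul :: "complex \<Rightarrow> 'v::ab_group_add \<Rightarrow> 'v"
    and dact :: "complex^'n::finite \<Rightarrow> int^'n \<Rightarrow> 'v \<Rightarrow> 'v"
    and tact :: "int^'n \<Rightarrow> 'v \<Rightarrow> 'v"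
  assumes G_module: "is_G_module smul dact tact"
    and irreducible: "is_irreducible smul dact tact"
    and cuspidal: "is_cuspidal smul dact"
begin

sublocale vector_space_char_0 smul
  using G_module by (simp add: is_G_module_def vector_space_char_0_def)

abbreviation wspace :: "complex^'n \<Rightarrow> 'v set" where
  "wspace l \<equiv> weight_space smul dact l"

lemma linear_tact: "linear_endo (tact m)"
  using G_module by (simp add: is_G_module_def)

lemma linear_dact: "pair u r = 0 \<Longrightarrow> linear_endo (dact u r)"
  using G_module by (simp add: is_G_module_def)

lemma tact_commute: "tact r (tact m v) = tact m (tact r v)"
  using G_module by (simp add: is_G_module_def)

lemma tact_dact:
  assumes "pair u r = 0"
  shows "tact m (dact u r v) = dact u r (tact m v) - smul (pair u m) (tact (r + m) v)"
proof -
  have "dact u r (tact m v) - tact m (dact u r v) = smul (pair u m) (tact (r + m) v)"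
    using G_module assms unfolding is_G_module_def by blast
  then show ?thesis
    by (simp add: algebra_simps)
qed

lemma dact_commutator:
  assumes "pair p m = 0" "pair q k = 0"
  shows "dact p m (dact q k v) - dact q k (dact p m v)
    = dact (\<chi> i. pair p k * q$i - pair q m * p$i) (m + k) v"
  using G_module assms unfolding is_G_module_def by blast

lemma dact_linear_combination:
  assumes "pair u r = 0" "pair w r = 0"
  shows "dact (\<chi> i. a * u$i + b * w$i) r v = smul a (dact u r v) + smul b (dact w r v)"
  using G_module assms unfolding is_G_module_def by blast

lemma dact_0_dact:
  assumes "pair u s = 0"
  shows "dact u' 0 (dact u s v) = dact u s (dact u' 0 v) + smul (pair u' s) (dact u s v)"
proof -
  have "dact u' 0 (dact u s v) - dact u s (dact u' 0 v)
      = dact (\<chi> i. pair u' s * u$i - pair u 0 * u'$i) (0 + s) v"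
    using dact_commutator[OF pair_zero assms] .
  also have "\<dots> = dact (\<chi> i. pair u' s * u$i + 0 * u$i) s v"
    by simp
  also have "\<dots> = smul (pair u' s) (dact u s v)"
    using dact_linear_combination[OF assms assms, of "pair u' s" 0] by simp
  finally show ?thesis
    by (simp add: algebra_simps)
qed

lemma exists_nonzero_vector: obtains v :: 'v where "v \<noteq> 0"
  using irreducible unfolding is_irreducible_def by blast

lemma subspace_weight_space: "subspace (wspace l)"
proof -
  have "linear_endo (dact u 0)" for u
    using linear_dact[OF pair_zero] .
  then show ?thesis
    unfolding subspace_def weight_space_def
    by (auto simp: endo.linear_0 endo.linear_add endo.linear_scale scale_right_distrib
        scale_left_commute)
qed

lemma dact_weight_space:
  assumes "pair u s = 0" "v \<in> wspace l"
  shows "dact u s v \<in> wspace (shift_weight l s)"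
proof -
  have "dact u' 0 (dact u s v) = smul (cpair u' (shift_weight l s)) (dact u s v)" for u'
    using assms dact_0_dact[OF assms(1), of u' v]
    by (simp add: weight_space_def endo.linear_scale[OF linear_dact] cpair_shift_weight
        scale_left_distrib)
  then show ?thesis
    by (simp add: weight_space_def)
qed

lemma tact_weight_space:
  assumes "v \<in> wspace l"
  shows "tact s v \<in> wspace (shift_weight l s)"
proof -
  have "dact u' 0 (tact s v) = smul (cpair u' (shift_weight l s)) (tact s v)" for u'
    using assms tact_dact[of u' 0 s v]
    by (simp add: weight_space_def endo.linear_scale[OF linear_tact] cpair_shift_weight
        scale_left_distrib algebra_simps)
  then show ?thesis
    by (simp add: weight_space_def)
qed

lemma exists_nonzero_weight_vector:
  obtains l v where "v \<in> wspace l" "v \<noteq> 0"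
proof (rule ccontr)
  assume "\<not> thesis"
  then have "(\<Union>l. wspace l) \<subseteq> {0}"
    using that by blast
  then have "span (\<Union>l. wspace l) \<subseteq> {0}"
    by (rule span_minimal) simp
  moreover have "span (\<Union>l. wspace l) = UNIV"
    using cuspidal by (simp add: is_cuspidal_def)
  moreover obtain v :: 'v where "v \<noteq> 0"
    using exists_nonzero_vector .
  ultimately show False
    by auto
qed

lemma finite_independent_weight_vectors:
  "S \<subseteq> wspace l \<Longrightarrow> independent S \<Longrightarrow> finite S"
  using cuspidal by (auto simp: is_cuspidal_def)

lemma exists_weight_space_of_maximal_rank:
  obtains l S where "S \<subseteq> wspace l" "independent S" "S \<noteq> {}"
    "\<forall>l' S'. S' \<subseteq> wspace l' \<and> independent S' \<longrightarrow> card S' \<le> card S"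
proof -
  obtain N where N: "\<And>l S. S \<subseteq> wspace l \<Longrightarrow> independent S \<Longrightarrow> card S \<le> N"
    using cuspidal unfolding is_cuspidal_def by blast
  define ranks where "ranks = {card S | S l. S \<subseteq> wspace l \<and> independent S}"
  have "finite ranks"
    using N by (auto simp: ranks_def intro: finite_subset[of _ "{..N}"])
  obtain l v where v: "v \<in> wspace l" "v \<noteq> 0"
    using exists_nonzero_weight_vector .
  then have "1 \<in> ranks"
    unfolding ranks_def using independent_insertI[of v "{}"]
    by (intro CollectI exI[of _ "{v}"]) auto
  then have "Max ranks \<in> ranks" "1 \<le> Max ranks"
    using \<open>finite ranks\<close> by (auto intro: Max_in)
  then obtain l S where S: "S \<subseteq> wspace l" "independent S" "card S = Max ranks"
    unfolding ranks_def by auto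
  show ?thesis
  proof (rule that[OF S(1,2)])
    show "S \<noteq> {}"
      using S(3) \<open>1 \<le> Max ranks\<close> by auto
    have "card S' \<le> card S" if "S' \<subseteq> wspace l'" "independent S'" for l' S'
    proof -
      have "card S' \<in> ranks"
        using that unfolding ranks_def by blast
      then show ?thesis
        using Max_ge[OF \<open>finite ranks\<close>] S(3) by simp
    qed
    then show "\<forall>l' S'. S' \<subseteq> wspace l' \<and> independent S' \<longrightarrow> card S' \<le> card S"
      by blast
  qed
qed

lemma weight_space_maximal_rank_onto:
  assumes S: "S \<subseteq> wspace l" "independent S"
    and maximal: "\<forall>l' S'. S' \<subseteq> wspace l' \<and> independent S' \<longrightarrow> card S' \<le> card S"
    and T: "linear_endo T" "inj T"
    and T_weight: "\<And>v. v \<in> wspace l \<Longrightarrow> T v \<in> wspace l'"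
  shows "wspace l' \<subseteq> T ` wspace l"
proof
  fix w
  assume w: "w \<in> wspace l'"
  have "finite S"
    using finite_independent_weight_vectors[OF S] .
  have inj_T: "inj_on T A" for A
    using inj_on_subset[OF T(2) subset_UNIV] .
  have TS: "independent (T ` S)"
    using endo.linear_independent_injective_image[OF T(1) S(2) inj_T] .
  have "w \<in> span (T ` S)"
  proof (rule ccontr)
    assume "w \<notin> span (T ` S)"
    then have "independent (insert w (T ` S))" "w \<notin> T ` S"
      using independent_insertI[OF _ TS] span_superset by blast+
    moreover have "insert w (T ` S) \<subseteq> wspace l'"
      using w S(1) T_weight by blast
    ultimately have "card (insert w (T ` S)) \<le> card S"
      using maximal by blast
    then show False
      using \<open>w \<notin> T ` S\<close> \<open>finite S\<close> card_image[OF inj_T] by simp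
  qed
  also have "span (T ` S) = T ` span S"
    using endo.linear_span_image[OF T(1)] .
  also have "\<dots> \<subseteq> T ` wspace l"
    using span_minimal[OF S(1) subspace_weight_space] by (rule image_mono)
  finally show "w \<in> T ` wspace l" .
qed

lemma no_height_raising_weight_operator:
  assumes y: "linear_endo y" "locally_nilpotent y"
    and v: "v \<in> wspace l" "v \<noteq> 0"
    and Q: "\<And>w. w \<in> wspace l \<Longrightarrow> Q w \<in> wspace l"
    and raise: "\<And>w. w \<in> wspace l \<Longrightarrow> w \<noteq> 0 \<Longrightarrow>
      nil_height y w < nil_height y (Q w)"
  shows False
proof -
  have "Q ` wspace l \<subseteq> wspace l"
    using Q by blast
  then obtain S where "S \<subseteq> wspace l" "independent S" "infinite S"
    using exists_infinite_independent_if_height_raising[OF y v _ raise] by blast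
  then show False
    using finite_independent_weight_vectors by blast
qed

lemma inj_or_locally_nilpotent:
  assumes y: "linear_endo y"
    and y_tact: "\<And>m v. y (tact m v) = tact m (y v)"
    and y_dact: "\<And>u r. pair u r = 0 \<Longrightarrow> \<exists>z. (\<forall>v. y (z v) = z (y v)) \<and>
      (\<forall>v. y (dact u r v) = dact u r (y v) - z v)"
  shows "inj y \<or> locally_nilpotent y"
proof -
  define S where "S = {v. \<exists>k. (y ^^ k) v = 0}"
  have "tact m ` S \<subseteq> S" for m
  proof
    fix w
    assume "w \<in> tact m ` S"
    then obtain v k where "w = tact m v" "(y ^^ k) v = 0"
      by (auto simp: S_def)
    then have "(y ^^ k) w = 0"
      using funpow_apply_commute[of y "tact m" k v] y_tact endo.linear_0[OF linear_tact] by simp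
    then show "w \<in> S"
      by (auto simp: S_def)
  qed
  moreover have "dact u r ` S \<subseteq> S" if ur: "pair u r = 0" for u r
  proof -
    obtain z where yz: "\<And>v. y (z v) = z (y v)"
      and yD: "\<And>v. y (dact u r v) = dact u r (y v) - z v"
      using y_dact[OF ur] by blast
    show ?thesis
      unfolding S_def using funpow_commutator_eq_0[OF y linear_dact[OF ur] yz yD] by blast
  qed
  ultimately have "S = {0} \<or> S = UNIV"
    using irreducible subspace_locally_nilpotent_vectors[OF y]
    unfolding is_irreducible_def S_def by blast
  then show ?thesis
  proof
    assume "S = {0}"
    have "x = 0" if "y x = 0" for x
    proof -
      have "x \<in> S"
        using that unfolding S_def by (auto intro: exI[of _ 1])
      then show ?thesis
        using \<open>S = {0}\<close> by simp
    qed
    then show ?thesis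
      using endo.linear_inj_iff_eq_0[OF y] by blast
  next
    assume "S = UNIV"
    then show ?thesis
      unfolding S_def locally_nilpotent_def by auto
  qed
qed

lemma tact_inj_or_locally_nilpotent: "inj (tact a) \<or> locally_nilpotent (tact a)"
proof (rule inj_or_locally_nilpotent[OF linear_tact])
  show "tact a (tact m v) = tact m (tact a v)" for m v
    by (rule tact_commute)
  fix u :: "complex^'n" and r
  assume "pair u r = 0"
  show "\<exists>z. (\<forall>v. tact a (z v) = z (tact a v)) \<and>
      (\<forall>v. tact a (dact u r v) = dact u r (tact a v) - z v)"
  proof (intro exI conjI allI)
    fix v
    show "tact a (smul (pair u a) (tact (r + a) v)) = smul (pair u a) (tact (r + a) (tact a v))"
      by (simp add: endo.linear_scale[OF linear_tact] tact_commute)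
    show "tact a (dact u r v) = dact u r (tact a v) - smul (pair u a) (tact (r + a) v)"
      using tact_dact[OF \<open>pair u r = 0\<close>] .
  qed
qed

lemma not_inj_and_locally_nilpotent:
  assumes "linear_endo f" "inj f"
  shows "\<not> locally_nilpotent f"
proof
  assume "locally_nilpotent f"
  obtain v :: 'v where "v \<noteq> 0"
    using exists_nonzero_vector .
  then show False
    using not_inj_if_locally_nilpotent[OF assms(1) \<open>locally_nilpotent f\<close>] assms(2) by blast
qed

section \<open>Injective and locally nilpotent directions\<close>

lemma nil_height_less_dact_tact:
  assumes x: "locally_nilpotent (tact x)"
    and u: "pair u s = 0" "pair u x \<noteq> 0"
    and "inj (tact (s + x))" "w \<noteq> 0"
  shows "nil_height (tact x) w < nil_height (tact x) (dact u s w)"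
proof (rule nil_height_less_apply[where z = "\<lambda>v. smul (pair u x) (tact (s + x) v)"])
  show "linear_endo (\<lambda>v. smul (pair u x) (tact (s + x) v))"
    using endo.linear_compose_scale_right[OF linear_tact] .
  show "inj (\<lambda>v. smul (pair u x) (tact (s + x) v))"
    using inj_scale_comp[OF u(2) \<open>inj (tact (s + x))\<close>] .
  show "tact x (smul (pair u x) (tact (s + x) v)) = smul (pair u x) (tact (s + x) (tact x v))" for v
    by (simp add: endo.linear_scale[OF linear_tact] tact_commute)
  show "tact x (dact u s v) = dact u s (tact x v) - smul (pair u x) (tact (s + x) v)" for v
    using tact_dact[OF u(1)] .
qed (fact linear_tact x linear_dact[OF u(1)] \<open>w \<noteq> 0\<close>)+

lemma no_height_raising_dact_pair:
  assumes y: "linear_endo y" "locally_nilpotent y"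
    and u: "pair u s = 0"
    and raise: "\<And>w. w \<noteq> 0 \<Longrightarrow> nil_height y w < nil_height y (dact u s w)"
      "\<And>w. w \<noteq> 0 \<Longrightarrow> nil_height y w < nil_height y (dact u (- s) w)"
  shows False
proof -
  obtain l v where v: "v \<in> wspace l" "v \<noteq> 0"
    using exists_nonzero_weight_vector .
  have "pair u (- s) = 0"
    using u by (simp add: pair_uminus)
  have "nil_height y 0 = 0"
    using nil_height_eq_0_iff[OF y] by simp
  show False
  proof (rule no_height_raising_weight_operator[OF y v, of "\<lambda>w. dact u (- s) (dact u s w)"])
    fix w
    assume w: "w \<in> wspace l"
    show "dact u (- s) (dact u s w) \<in> wspace l"
      using dact_weight_space[OF \<open>pair u (- s) = 0\<close> dact_weight_space[OF u w]]
      by (simp add: shift_weight_shift_weight)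
    assume "w \<noteq> 0"
    then have "nil_height y w < nil_height y (dact u s w)"
      by (rule raise(1))
    moreover from this have "dact u s w \<noteq> 0"
      using \<open>nil_height y 0 = 0\<close> by auto
    then have "nil_height y (dact u s w) < nil_height y (dact u (- s) (dact u s w))"
      by (rule raise(2))
    ultimately show "nil_height y w < nil_height y (dact u (- s) (dact u s w))"
      by linarith
  qed
qed

lemma not_inj_tact_add_and_diff:
  assumes x: "locally_nilpotent (tact x)" and "gram_det x s \<noteq> 0"
  shows "\<not> (inj (tact (x + s)) \<and> inj (tact (x - s)))"
proof
  assume inj: "inj (tact (x + s)) \<and> inj (tact (x - s))"
  obtain u where u: "pair u s = 0" "pair u x \<noteq> 0"
    using exists_separating_pair[OF assms(2)] .
  have "pair u (- s) = 0"
    using u by (simp add: pair_uminus)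
  show False
  proof (rule no_height_raising_dact_pair[OF linear_tact x u(1)])
    show "nil_height (tact x) w < nil_height (tact x) (dact u s w)" if "w \<noteq> 0" for w
      using nil_height_less_dact_tact[OF x u _ that] inj by (simp add: add.commute)
    show "nil_height (tact x) w < nil_height (tact x) (dact u (- s) w)" if "w \<noteq> 0" for w
      using nil_height_less_dact_tact[OF x \<open>pair u (- s) = 0\<close> u(2) _ that] inj by simp
  qed
qed

lemma locally_nilpotent_tact_diff:
  assumes x: "locally_nilpotent (tact x)" and p: "inj (tact p)" and "gram_det x p \<noteq> 0"
  shows "locally_nilpotent (tact (x - p))"
proof (rule ccontr)
  assume "\<not> locally_nilpotent (tact (x - p))"
  then have "inj (tact (- p + x))"
    using tact_inj_or_locally_nilpotent[of "x - p"] by simp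
  obtain u where u: "pair u p = 0" "pair u x \<noteq> 0"
    using exists_separating_pair[OF assms(3)] .
  then have "pair u (- p) = 0"
    by (simp add: pair_uminus)
  obtain l v where v: "v \<in> wspace l" "v \<noteq> 0"
    using exists_nonzero_weight_vector .
  show False
  proof (rule no_height_raising_weight_operator[OF linear_tact x v,
        of "\<lambda>w. tact p (dact u (- p) w)"])
    fix w
    assume w: "w \<in> wspace l"
    show "tact p (dact u (- p) w) \<in> wspace l"
      using tact_weight_space[OF dact_weight_space[OF \<open>pair u (- p) = 0\<close> w], of p]
      by (simp add: shift_weight_shift_weight)
    assume "w \<noteq> 0"
    have "nil_height (tact x) w < nil_height (tact x) (dact u (- p) w)"
      using nil_height_less_dact_tact[OF x \<open>pair u (- p) = 0\<close> u(2) \<open>inj (tact (- p + x))\<close>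
          \<open>w \<noteq> 0\<close>] .
    also have "\<dots> = nil_height (tact x) (tact p (dact u (- p) w))"
      using nil_height_apply_inj_commuting[where T = "tact p" and y = "tact x",
          OF linear_tact p tact_commute] by simp
    finally show "nil_height (tact x) w < nil_height (tact x) (tact p (dact u (- p) w))" .
  qed
qed

lemma locally_nilpotent_tact_add:
  assumes x: "locally_nilpotent (tact x)" and p: "inj (tact p)" and "gram_det x p \<noteq> 0"
  shows "locally_nilpotent (tact (x + p))"
proof (rule ccontr)
  assume "\<not> locally_nilpotent (tact (x + p))"
  then have "inj (tact (p + x))"
    using tact_inj_or_locally_nilpotent[of "x + p"] by (simp add: add.commute)
  obtain u where u: "pair u p = 0" "pair u x \<noteq> 0"
    using exists_separating_pair[OF assms(3)] .
  obtain l S where S: "S \<subseteq> wspace l" "independent S" "S \<noteq> {}"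
    and maximal: "\<forall>l' S'. S' \<subseteq> wspace l' \<and> independent S' \<longrightarrow> card S' \<le> card S"
    by (rule exists_weight_space_of_maximal_rank)
  obtain v where "v \<in> S"
    using S(3) by blast
  then have v: "v \<in> wspace l" "v \<noteq> 0"
    using S(1,2) dependent_zero by auto
  have onto: "wspace (shift_weight l p) \<subseteq> tact p ` wspace l"
    using weight_space_maximal_rank_onto[OF S(1,2) maximal linear_tact p tact_weight_space] .
  \<comment> \<open>By maximality t^p maps the weight space l onto the weight space l + p, so D(u,p) can be
    followed by a t^p-preimage to return to the weight space l.\<close>
  define Q where "Q w = inv_into (wspace l) (tact p) (dact u p w)" for w
  have Q: "Q w \<in> wspace l" "tact p (Q w) = dact u p w"
    if "w \<in> wspace l" for w
  proof -
    have "dact u p w \<in> tact p ` wspace l"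
      using dact_weight_space[OF u(1) that] onto by blast
    then show "Q w \<in> wspace l" "tact p (Q w) = dact u p w"
      unfolding Q_def by (rule inv_into_into, rule f_inv_into_f)
  qed
  show False
  proof (rule no_height_raising_weight_operator[OF linear_tact x v, of Q])
    fix w
    assume w: "w \<in> wspace l"
    then show "Q w \<in> wspace l"
      by (rule Q(1))
    assume "w \<noteq> 0"
    have "nil_height (tact x) w < nil_height (tact x) (dact u p w)"
      using nil_height_less_dact_tact[OF x u \<open>inj (tact (p + x))\<close> \<open>w \<noteq> 0\<close>] .
    also have "\<dots> = nil_height (tact x) (Q w)"
      using nil_height_apply_inj_commuting[where T = "tact p" and y = "tact x",
          OF linear_tact p tact_commute, of "Q w"] Q(2)[OF w] by simp
    finally show "nil_height (tact x) w < nil_height (tact x) (Q w)" .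
  qed
qed

lemma inj_tact_add:
  assumes a: "inj (tact a)" and b: "inj (tact b)" and "gram_det a b \<noteq> 0"
  shows "inj (tact (a + b))"
proof -
  have "\<not> locally_nilpotent (tact (a + b))"
  proof
    assume "locally_nilpotent (tact (a + b))"
    moreover have "gram_det (a + b) b \<noteq> 0"
      using assms(3) by (simp add: gram_det_add_left)
    ultimately have "locally_nilpotent (tact (a + b - b))"
      by (rule locally_nilpotent_tact_diff[OF _ b])
    then show False
      using not_inj_and_locally_nilpotent[OF linear_tact a] by simp
  qed
  then show ?thesis
    using tact_inj_or_locally_nilpotent by blast
qed

lemma inj_tact_diff:
  assumes a: "inj (tact a)" and b: "inj (tact b)" and "gram_det a b \<noteq> 0"
  shows "inj (tact (a - b))"
proof -
  have "\<not> locally_nilpotent (tact (a - b))"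
  proof
    assume "locally_nilpotent (tact (a - b))"
    moreover have "gram_det (a - b) b \<noteq> 0"
      using assms(3) by (simp add: gram_det_diff_left)
    ultimately have "locally_nilpotent (tact (a - b + b))"
      by (rule locally_nilpotent_tact_add[OF _ b])
    then show False
      using not_inj_and_locally_nilpotent[OF linear_tact a] by simp
  qed
  then show ?thesis
    using tact_inj_or_locally_nilpotent by blast
qed

lemma locally_nilpotent_tact_uminus:
  assumes x: "locally_nilpotent (tact x)" and m: "inj (tact m)" and "gram_det x m \<noteq> 0"
  shows "locally_nilpotent (tact (- x))"
proof (rule ccontr)
  assume "\<not> locally_nilpotent (tact (- x))"
  then have "inj (tact (- x))"
    using tact_inj_or_locally_nilpotent by blast
  moreover have "gram_det m (- x) \<noteq> 0"
    using assms(3) by (simp add: gram_det_commute[of m] gram_det_uminus_left)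
  ultimately have "inj (tact (m + - x))"
    by (rule inj_tact_add[OF m])
  moreover have "gram_det x (m + - x) \<noteq> 0"
    using assms(3) by (simp add: gram_det_commute[of x] gram_det_diff_left)
  ultimately have "locally_nilpotent (tact (x + (m + - x)))"
    by (rule locally_nilpotent_tact_add[OF x])
  then show False
    using not_inj_and_locally_nilpotent[OF linear_tact m] by simp
qed


definition tact_sum :: "int^'n \<Rightarrow> int^'n \<Rightarrow> 'v \<Rightarrow> 'v" where
  "tact_sum a b v = tact a v + tact b v"

lemma linear_tact_sum: "linear_endo (tact_sum a b)"
  unfolding tact_sum_def[abs_def] by (rule endo.linear_compose_add[OF linear_tact linear_tact])

lemma tact_sum_commute: "tact_sum a b = tact_sum b a"
  by (simp add: tact_sum_def[abs_def] add.commute)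

lemma tact_sum_tact: "tact_sum a b (tact m v) = tact m (tact_sum a b v)"
  by (simp add: tact_sum_def tact_commute endo.linear_add[OF linear_tact])

lemma tact_sum_tact_sum: "tact_sum a b (tact_sum c d v) = tact_sum c d (tact_sum a b v)"
  by (simp add: tact_sum_def tact_commute endo.linear_add[OF linear_tact] algebra_simps)

lemma tact_sum_dact:
  assumes "pair u r = 0"
  shows "tact_sum a b (dact u r v)
    = dact u r (tact_sum a b v)
      - (smul (pair u a) (tact (r + a) v) + smul (pair u b) (tact (r + b) v))"
  by (simp add: tact_sum_def tact_dact[OF assms] endo.linear_add[OF linear_dact[OF assms]]
      algebra_simps)

lemma tact_sum_inj_or_locally_nilpotent: "inj (tact_sum a b) \<or> locally_nilpotent (tact_sum a b)"
proof (rule inj_or_locally_nilpotent[OF linear_tact_sum])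
  show "tact_sum a b (tact m v) = tact m (tact_sum a b v)" for m v
    by (rule tact_sum_tact)
  fix u :: "complex^'n" and r
  assume "pair u r = 0"
  show "\<exists>z. (\<forall>v. tact_sum a b (z v) = z (tact_sum a b v)) \<and>
      (\<forall>v. tact_sum a b (dact u r v) = dact u r (tact_sum a b v) - z v)"
  proof (intro exI conjI allI)
    fix v
    show "tact_sum a b (smul (pair u a) (tact (r + a) v) + smul (pair u b) (tact (r + b) v))
        = smul (pair u a) (tact (r + a) (tact_sum a b v))
          + smul (pair u b) (tact (r + b) (tact_sum a b v))"
      by (simp add: endo.linear_add[OF linear_tact_sum] endo.linear_scale[OF linear_tact_sum]
          tact_sum_tact)
    show "tact_sum a b (dact u r v) = dact u r (tact_sum a b v)
        - (smul (pair u a) (tact (r + a) v) + smul (pair u b) (tact (r + b) v))"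
      using tact_sum_dact[OF \<open>pair u r = 0\<close>] .
  qed
qed

lemma inj_tact_sum:
  assumes "inj (tact a)" "locally_nilpotent (tact b)"
  shows "inj (tact_sum a b)"
proof -
  have "\<not> locally_nilpotent (tact_sum a b)"
  proof
    assume "locally_nilpotent (tact_sum a b)"
    obtain v0 :: 'v where "v0 \<noteq> 0"
      using exists_nonzero_vector .
    obtain v where "v \<noteq> 0" "tact_sum a b v = 0" "tact b v = 0"
      using exists_common_kernel_vector[where A = "tact_sum a b" and B = "tact b",
          OF linear_tact_sum \<open>locally_nilpotent (tact_sum a b)\<close> linear_tact assms(2)
          tact_sum_tact \<open>v0 \<noteq> 0\<close>] .
    then have "tact a v = 0"
      by (simp add: tact_sum_def)
    then show False
      using \<open>v \<noteq> 0\<close> assms(1) endo.linear_inj_iff_eq_0[OF linear_tact] by blast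
  qed
  then show ?thesis
    using tact_sum_inj_or_locally_nilpotent by blast
qed

lemma locally_nilpotent_tact_sum:
  assumes "locally_nilpotent (tact a)" "locally_nilpotent (tact b)"
  shows "locally_nilpotent (tact_sum a b)"
proof -
  obtain v0 :: 'v where "v0 \<noteq> 0"
    using exists_nonzero_vector .
  obtain v where "v \<noteq> 0" "tact a v = 0" "tact b v = 0"
    using exists_common_kernel_vector[where A = "tact a" and B = "tact b",
        OF linear_tact assms(1) linear_tact assms(2) tact_commute \<open>v0 \<noteq> 0\<close>] .
  then have "tact_sum a b v = 0"
    by (simp add: tact_sum_def)
  then have "\<not> inj (tact_sum a b)"
    using \<open>v \<noteq> 0\<close> endo.linear_inj_iff_eq_0[OF linear_tact_sum] by blast
  then show ?thesis
    using tact_sum_inj_or_locally_nilpotent by blast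
qed

lemma nil_height_less_dact_tact_sum:
  assumes y: "locally_nilpotent (tact_sum a b)"
    and u: "pair u s = 0" "pair u a = c" "pair u b = c" "c \<noteq> 0"
    and "inj (tact_sum (s + a) (s + b))" "w \<noteq> 0"
  shows "nil_height (tact_sum a b) w < nil_height (tact_sum a b) (dact u s w)"
proof (rule nil_height_less_apply[where z = "\<lambda>v. smul c (tact_sum (s + a) (s + b) v)"])
  show "linear_endo (\<lambda>v. smul c (tact_sum (s + a) (s + b) v))"
    using endo.linear_compose_scale_right[OF linear_tact_sum] .
  show "inj (\<lambda>v. smul c (tact_sum (s + a) (s + b) v))"
    using inj_scale_comp[OF u(4) \<open>inj (tact_sum (s + a) (s + b))\<close>] .
  show "tact_sum a b (smul c (tact_sum (s + a) (s + b) v))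
      = smul c (tact_sum (s + a) (s + b) (tact_sum a b v))" for v
    by (simp add: endo.linear_scale[OF linear_tact_sum] tact_sum_tact_sum)
  show "tact_sum a b (dact u s v) = dact u s (tact_sum a b v) - smul c (tact_sum (s + a) (s + b) v)"
    for v
    using tact_sum_dact[OF u(1)] u(2,3) by (simp add: tact_sum_def scale_right_distrib)
qed (fact linear_tact_sum y linear_dact[OF u(1)] \<open>w \<noteq> 0\<close>)+

text \<open>The commutators of t^(m-r) + t^(m+r) with D(u,r) and D(u,-r) are (u|m) times
  t^m + t^(m+2r) and t^m + t^(m-2r), which are injective by the hypotheses.\<close>

lemma not_locally_nilpotent_tact_sum_around:
  assumes u: "pair u r = 0" "pair u m \<noteq> 0"
    and "inj (tact_sum m (r + r + m))" "inj (tact_sum m (- (r + r) + m))"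
  shows "\<not> locally_nilpotent (tact_sum (- r + m) (r + m))"
proof
  define a b where "a = - r + m" and "b = r + m"
  assume "locally_nilpotent (tact_sum (- r + m) (r + m))"
  then have y: "locally_nilpotent (tact_sum a b)"
    by (simp add: a_def b_def)
  have shifts: "r + a = m" "r + b = r + r + m" "- r + a = - (r + r) + m" "- r + b = m"
    by (simp_all add: a_def b_def add.assoc)
  have "inj (tact_sum (r + a) (r + b))" "inj (tact_sum (- r + a) (- r + b))"
    using assms(3,4) unfolding shifts tact_sum_commute[of "- (r + r) + m"] by blast+
  moreover have "pair u a = pair u m" "pair u b = pair u m" "pair u (- r) = 0"
    using u(1) by (simp_all add: a_def b_def pair_add pair_diff pair_uminus)
  ultimately show False
    using no_height_raising_dact_pair[OF linear_tact_sum y u(1)]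
      nil_height_less_dact_tact_sum[OF y u(1) _ _ u(2)]
      nil_height_less_dact_tact_sum[OF y \<open>pair u (- r) = 0\<close> _ _ u(2)]
    by blast
qed

lemma inj_tact_double:
  assumes r: "locally_nilpotent (tact r)" and m: "inj (tact m)" and "gram_det r m \<noteq> 0"
  shows "inj (tact (r + r))"
proof (rule ccontr)
  assume "\<not> inj (tact (r + r))"
  then have rr: "locally_nilpotent (tact (r + r))"
    using tact_inj_or_locally_nilpotent by blast
  have "gram_det m r \<noteq> 0"
    using assms(3) by (simp add: gram_det_commute)
  then obtain u where u: "pair u r = 0" "pair u m \<noteq> 0"
    using exists_separating_pair by blast
  have "gram_det (r + r) m \<noteq> 0" "gram_det (- (r + r)) m \<noteq> 0"
    using assms(3) unfolding gram_det_uminus_left gram_det_double_left by simp_all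
  then have "locally_nilpotent (tact (r + r + m))" "locally_nilpotent (tact (- (r + r) + m))"
    using locally_nilpotent_tact_add[OF rr m]
      locally_nilpotent_tact_add[OF locally_nilpotent_tact_uminus[OF rr m] m] by blast+
  then have "inj (tact_sum m (r + r + m))" "inj (tact_sum m (- (r + r) + m))"
    using inj_tact_sum[OF m] by blast+
  moreover have "locally_nilpotent (tact (- r + m))"
    using locally_nilpotent_tact_add[OF locally_nilpotent_tact_uminus[OF r m assms(3)] m] assms(3)
    by (simp add: gram_det_uminus_left)
  then have "locally_nilpotent (tact_sum (- r + m) (r + m))"
    using locally_nilpotent_tact_sum locally_nilpotent_tact_add[OF r m assms(3)] by blast
  ultimately show False
    using not_locally_nilpotent_tact_sum_around[OF u] by blast
qed

lemma gram_det_eq_0_if_locally_nilpotent_inj: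
  assumes r: "locally_nilpotent (tact r)" and m: "inj (tact m)"
  shows "gram_det r m = 0"
proof (rule ccontr)
  assume g: "gram_det r m \<noteq> 0"
  then have rr: "inj (tact (r + r))"
    by (rule inj_tact_double[OF r m])
  have "gram_det (r + r) m \<noteq> 0"
    using g unfolding gram_det_double_left by simp
  then have rrm: "inj (tact (r + r + m))"
    by (rule inj_tact_add[OF rr m])
  have "gram_det (r + r) (r + r + m) \<noteq> 0"
    using g unfolding gram_det_add_self_right gram_det_double_left by simp
  then have "inj (tact (r + r - (r + r + m)))"
    by (rule inj_tact_diff[OF rr rrm])
  moreover have shifts: "r + (r + m) = r + r + m" "r - (r + m) = r + r - (r + r + m)"
    by (simp_all add: algebra_simps)
  ultimately have "inj (tact (r + (r + m))) \<and> inj (tact (r - (r + m)))"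
    using rrm by (simp only: shifts)
  moreover have "gram_det r (r + m) \<noteq> 0"
    using g unfolding gram_det_add_self_right .
  ultimately show False
    using not_inj_tact_add_and_diff[OF r] by blast
qed

end

theorem proposition3p3:
  fixes smul :: "complex \<Rightarrow> 'v::ab_group_add \<Rightarrow> 'v"
    and dact :: "complex^'n::finite \<Rightarrow> int^'n \<Rightarrow> 'v \<Rightarrow> 'v"
    and tact :: "int^'n \<Rightarrow> 'v \<Rightarrow> 'v"
  assumes "CARD('n) \<ge> 3"
    and "is_G_module smul dact tact"
    and "is_irreducible smul dact tact"
    and "is_cuspidal smul dact"
  shows "(\<forall>r::int^'n. r \<noteq> 0 \<longrightarrow> inj (tact r)) \<or>
         (\<forall>r::int^'n. r \<noteq> 0 \<longrightarrow> (\<forall>v. \<exists>k::nat. (tact r ^^ k) v = 0))"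
proof -
  interpret irreducible_cuspidal_module smul dact tact
    using assms(2-4) by unfold_locales
  show ?thesis
  proof (rule ccontr)
    assume "\<not> ?thesis"
    then obtain r m :: "int^'n"
      where "r \<noteq> 0" "\<not> inj (tact r)" "m \<noteq> 0" "\<not> locally_nilpotent (tact m)"
      unfolding locally_nilpotent_def by blast
    then have r: "locally_nilpotent (tact r)" and m: "inj (tact m)"
      using tact_inj_or_locally_nilpotent by blast+
    obtain w where "gram_det w r \<noteq> 0" "gram_det w m \<noteq> 0"
      using exists_gram_det_ne_zero_with_both[OF assms(1) \<open>r \<noteq> 0\<close> \<open>m \<noteq> 0\<close>] .
    then show False
      using tact_inj_or_locally_nilpotent[of w] gram_det_commute[of w r]
        gram_det_eq_0_if_locally_nilpotent_inj[OF r, of w]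
        gram_det_eq_0_if_locally_nilpotent_inj[OF _ m, of w] by auto
  qed
qed

end
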